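(* Let $(R,\mathfrak{m})$ be a commutative Artinian local ring with identity, $\mathfrak{m}\neq0$ and $\mathfrak{m}^2=0$. For every positive integer $n$, $n-1\notin L(x^n)$; and if $n$ is odd, then $2\notin L(x^n)$.
   Context: A nonunit polynomial in $R[x]$ is irreducible if in any factorization into two polynomials one factor is a unit of $R[x]$. A positive integer $k$ is a length of $f\in R[x]$ if $f$ is a product of $k$ irreducible polynomials of $R[x]$; $L(f)$ denotes the set of lengths of $f$. *)

theory Defs
  imports "HOL-Computational_Algebra.Polynomial" "HOL-Computational_Algebra.Factorial_Ring"
begin

definition is_ideal :: "'a::comm_ring_1 set \<Rightarrow> bool" where
  "is_ideal I \<longleftrightarrow> 0 \<in> I \<and> (\<forall>a\<in>I. \<forall>b\<in>I. a + b \<in> I) \<and> (\<forall>r. \<forall>a\<in>I. r * a \<in> I)"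

definition maximal_ideal :: "'a::comm_ring_1 set \<Rightarrow> bool" where
  "maximal_ideal M \<longleftrightarrow> is_ideal M \<and> M \<noteq> UNIV \<and>
     (\<forall>J. is_ideal J \<and> M \<subseteq> J \<longrightarrow> J = M \<or> J = UNIV)"

definition local_ring_with_max :: "'a::comm_ring_1 set \<Rightarrow> bool" where
  "local_ring_with_max M \<longleftrightarrow> maximal_ideal M \<and> (\<forall>N. maximal_ideal N \<longrightarrow> N = M)"

definition artinian_ring :: "'a::comm_ring_1 itself \<Rightarrow> bool" where
  "artinian_ring _ \<longleftrightarrow> (\<forall>I :: nat \<Rightarrow> 'a set. (\<forall>k. is_ideal (I k) \<and> I (Suc k) \<subseteq> I k)
       \<longrightarrow> (\<exists>N. \<forall>k\<ge>N. I k = I N))"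

definition lengths :: "'a::comm_ring_1 poly \<Rightarrow> nat set" where
  "lengths f = {k. k > 0 \<and> (\<exists>fs. length fs = k \<and> (\<forall>g\<in>set fs. irreducible g) \<and> prod_list fs = f)}"

end

theory Submission
  imports Defs
begin

text \<open>Since \<open>M\<^sup>2 = 0\<close>, every \<open>a \<notin> M\<close> is a unit, so modulo \<open>M\<close> every factor of \<open>x\<^sup>n\<close>
  is a unit times a power \<open>x\<^sup>d\<close>; for an irreducible factor \<open>d \<ge> 1\<close>, and if \<open>d \<ge> 2\<close> its constant
  term is a nonzero element of \<open>M\<close> (otherwise \<open>x\<close> would split off). A factorization into \<open>n - 1\<close>
  irreducibles has residue degrees \<open>2, 1, \<dots>, 1\<close>, and one of odd \<open>x\<^sup>n\<close> into two irreducibles has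
  distinct residue degrees. In both cases the constant term of a factor of residue degree \<open>d \<ge> 2\<close>,
  times the unit coefficient of its cofactor, gives a nonzero coefficient of \<open>x\<^sup>n\<close> below degree
  \<open>n\<close>: every other contribution is a product of two elements of \<open>M\<close> or vanishes.\<close>

lemma coeff_x_power: "coeff ([:0, 1:] ^ n :: 'a::comm_ring_1 poly) j = (if j = n then 1 else 0)"
  using coeff_monom[of "1::'a" n j] by (simp add: monom_altdef)

lemma sum_list_ge_length:
  "(\<And>x. x \<in> set xs \<Longrightarrow> 1 \<le> h x) \<Longrightarrow> length xs \<le> sum_list (map h xs :: nat list)"
  by (induct xs) (simp, fastforce)

lemma sum_list_eq_length_imp_all_one:
  "(\<And>x. x \<in> set xs \<Longrightarrow> 1 \<le> h x) \<Longrightarrow> sum_list (map h xs :: nat list) = length xs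
   \<Longrightarrow> \<forall>x\<in>set xs. h x = 1"
proof (induct xs)
  case (Cons a xs)
  have "1 \<le> h a" "length xs \<le> sum_list (map h xs)"
    using Cons.prems(1) sum_list_ge_length[of xs h] by auto
  with Cons.prems(2) have "h a = 1" "sum_list (map h xs) = length xs"
    by simp_all
  with Cons show ?case by simp
qed simp

lemma sum_list_eq_Suc_length_split:
  assumes "\<And>x. x \<in> set xs \<Longrightarrow> 1 \<le> h x" and "sum_list (map h xs :: nat list) = Suc (length xs)"
  shows "\<exists>ys g zs. xs = ys @ g # zs \<and> h g = 2 \<and> (\<forall>x\<in>set (ys @ zs). h x = 1)"
  using assms
proof (induct xs)
  case (Cons a xs)
  show ?case
  proof (cases "h a = 1")
    case True
    with Cons obtain ys g zs where "xs = ys @ g # zs" "h g = 2" "\<forall>x\<in>set (ys @ zs). h x = 1"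
      by auto
    with True show ?thesis by (intro exI[of _ "a # ys"]) auto
  next
    case False
    have "1 \<le> h a" "length xs \<le> sum_list (map h xs)"
      using Cons.prems(1) sum_list_ge_length[of xs h] by auto
    with False Cons.prems(2) have "h a = 2" "sum_list (map h xs) = length xs"
      by simp_all
    with Cons.prems show ?thesis
      using sum_list_eq_length_imp_all_one[of xs h] by (intro exI[of _ "[]"]) auto
  qed
qed simp

text \<open>\<open>f\<close> reduces to a nonzero monomial of degree \<open>d\<close> in \<open>(R/M)[x]\<close>.\<close>
definition residue_monomial :: "'a::comm_ring_1 set \<Rightarrow> 'a poly \<Rightarrow> nat \<Rightarrow> bool" where
  "residue_monomial M f d \<longleftrightarrow> coeff f d \<notin> M \<and> (\<forall>j. j \<noteq> d \<longrightarrow> coeff f j \<in> M)"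

lemma residue_monomial_unique: "residue_monomial M f d \<Longrightarrow> residue_monomial M f e \<Longrightarrow> d = e"
  unfolding residue_monomial_def by auto

locale maximal_square_zero =
  fixes M :: "'a::comm_ring_1 set"
  assumes maximal: "maximal_ideal M"
    and square_zero: "\<And>a b. a \<in> M \<Longrightarrow> b \<in> M \<Longrightarrow> a * b = 0"
begin

lemma ideal: "is_ideal M"
  using maximal by (simp add: maximal_ideal_def)

lemma zero_mem: "0 \<in> M"
  using ideal by (simp add: is_ideal_def)

lemma add_mem: "a \<in> M \<Longrightarrow> b \<in> M \<Longrightarrow> a + b \<in> M"
  using ideal by (simp add: is_ideal_def)

lemma mult_mem_left: "a \<in> M \<Longrightarrow> r * a \<in> M"
  using ideal by (simp add: is_ideal_def)

lemma mult_mem_right: "a \<in> M \<Longrightarrow> a * r \<in> M"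
  using mult_mem_left[of a r] by (simp add: mult.commute)

lemma one_not_mem: "1 \<notin> M"
  using maximal mult_mem_left[of 1] by (auto simp: maximal_ideal_def)

lemma not_mem_iff_unit: "a \<notin> M \<longleftrightarrow> a dvd 1"
proof
  assume "a \<notin> M"
  define J where "J = {m + r * a | m r. m \<in> M}"
  have "is_ideal J"
    unfolding is_ideal_def J_def
  proof (intro conjI ballI allI)
    show "0 \<in> {m + r * a |m r. m \<in> M}"
      using zero_mem by (intro CollectI exI[of _ 0]) auto
    fix x y assume "x \<in> {m + r * a |m r. m \<in> M}" "y \<in> {m + r * a |m r. m \<in> M}"
    then obtain m1 r1 m2 r2 where "x = m1 + r1 * a" "y = m2 + r2 * a" "m1 \<in> M" "m2 \<in> M"
      by auto
    then have "x + y = (m1 + m2) + (r1 + r2) * a" "m1 + m2 \<in> M"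
      by (auto simp: algebra_simps add_mem)
    then show "x + y \<in> {m + r * a |m r. m \<in> M}" by blast
  next
    fix r x assume "x \<in> {m + r * a |m r. m \<in> M}"
    then obtain m1 r1 where "x = m1 + r1 * a" "m1 \<in> M" by auto
    then have "r * x = r * m1 + (r * r1) * a" "r * m1 \<in> M"
      by (auto simp: algebra_simps mult_mem_left mult_mem_right)
    then show "r * x \<in> {m + r * a |m r. m \<in> M}" by blast
  qed
  moreover have "M \<subseteq> J"
    unfolding J_def by clarsimp (metis add.right_neutral mult_zero_left)
  moreover have "a \<in> J"
    unfolding J_def using zero_mem by (intro CollectI exI[of _ 0] exI[of _ 1]) simp
  ultimately have "J = UNIV"
    using maximal \<open>a \<notin> M\<close> by (auto simp: maximal_ideal_def)
  then obtain m r where mr: "1 = m + r * a" "m \<in> M"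
    unfolding J_def by blast
  \<comment> \<open>\<open>1 - m\<close> is a unit with inverse \<open>1 + m\<close> because \<open>m\<^sup>2 = 0\<close>.\<close>
  have "(1 - m) * (1 + m) = 1"
    using square_zero[OF mr(2) mr(2)] by (simp add: algebra_simps)
  moreover have "a * r = 1 - m"
    using mr(1) by (simp add: algebra_simps)
  ultimately have "a * (r * (1 + m)) = 1"
    by (simp add: mult.assoc[symmetric])
  then show "a dvd 1" by (metis dvdI)
next
  assume "a dvd 1"
  then obtain b where "1 = a * b" by (elim dvdE)
  then show "a \<notin> M"
    using mult_mem_right[of a b] one_not_mem by auto
qed

lemma mult_not_mem: "a \<notin> M \<Longrightarrow> b \<notin> M \<Longrightarrow> a * b \<notin> M"
  using mult_dvd_mono[of a 1 b 1] by (simp add: not_mem_iff_unit)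

lemma mult_not_mem_neq_zero:
  assumes "m \<noteq> 0" "u \<notin> M"
  shows "m * u \<noteq> 0"
proof
  assume "m * u = 0"
  obtain v where "1 = u * v"
    using assms(2) by (auto simp: not_mem_iff_unit)
  then have "m = m * u * v" by (simp add: mult.assoc)
  with \<open>m * u = 0\<close> assms(1) show False by simp
qed

lemma sum_mem: "finite S \<Longrightarrow> (\<And>i. i \<in> S \<Longrightarrow> t i \<in> M) \<Longrightarrow> sum t S \<in> M"
  by (induct S rule: finite_induct) (auto simp: zero_mem add_mem)

lemma sum_not_mem:
  assumes "finite S" "i \<in> S" "t i \<notin> M" "\<And>j. j \<in> S \<Longrightarrow> j \<noteq> i \<Longrightarrow> t j \<in> M"
  shows "sum t S \<notin> M"
proof
  assume "sum t S \<in> M"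
  moreover have rest: "sum t (S - {i}) \<in> M"
    using assms by (intro sum_mem) auto
  ultimately have "sum t S + (-1) * sum t (S - {i}) \<in> M"
    by (intro add_mem mult_mem_left)
  moreover have "sum t S = t i + sum t (S - {i})"
    using assms(1,2) by (rule sum.remove)
  ultimately show False
    using assms(3) by simp
qed

lemma coeff_mult_mem:
  assumes "\<And>i. i \<le> k \<Longrightarrow> coeff f i \<in> M \<or> coeff g (k - i) \<in> M"
  shows "coeff (f * g) k \<in> M"
proof -
  have "coeff f i * coeff g (k - i) \<in> M" if "i \<le> k" for i
    using assms[OF that] mult_mem_left mult_mem_right by blast
  then show ?thesis
    unfolding coeff_mult by (intro sum_mem) auto
qed

lemma coeff_mult_not_mem:
  assumes "a \<le> k" "coeff f a \<notin> M" "coeff g (k - a) \<notin> M"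
    and "\<And>i. i \<le> k \<Longrightarrow> i \<noteq> a \<Longrightarrow> coeff f i \<in> M \<or> coeff g (k - i) \<in> M"
  shows "coeff (f * g) k \<notin> M"
proof -
  have "coeff f i * coeff g (k - i) \<in> M" if "i \<le> k" "i \<noteq> a" for i
    using assms(4)[OF that] mult_mem_left mult_mem_right by blast
  then show ?thesis
    unfolding coeff_mult using assms(1-3) by (intro sum_not_mem[of _ a]) (auto simp: mult_not_mem)
qed

lemma highest_coeff_not_mem:
  assumes "coeff h k \<notin> M"
  shows "\<exists>a. coeff h a \<notin> M \<and> (\<forall>j>a. coeff h j \<in> M)"
proof -
  have fin: "finite {j. coeff h j \<notin> M}"
    by (rule finite_subset[of _ "{..degree h}"]) (auto intro: le_degree simp: zero_mem)
  show ?thesis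
    using Max_in[OF fin] Max_ge[OF fin] assms
    by (intro exI[of _ "Max {j. coeff h j \<notin> M}"]) (auto simp: not_le[symmetric])
qed

lemma residue_monomial_x_power: "residue_monomial M ([:0, 1:] ^ n) n"
  unfolding residue_monomial_def by (simp add: coeff_x_power zero_mem one_not_mem)

lemma residue_monomial_mult:
  assumes f: "residue_monomial M f d" and g: "residue_monomial M g e"
  shows "residue_monomial M (f * g) (d + e)"
  unfolding residue_monomial_def
proof (intro conjI allI impI)
  show "coeff (f * g) (d + e) \<notin> M"
    using f g unfolding residue_monomial_def by (intro coeff_mult_not_mem[of d]) auto
  fix k assume "k \<noteq> d + e"
  then have "coeff f i \<in> M \<or> coeff g (k - i) \<in> M" if "i \<le> k" for i
    using f g that unfolding residue_monomial_def by (cases "i = d") auto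
  then show "coeff (f * g) k \<in> M"
    by (rule coeff_mult_mem)
qed

lemma residue_monomial_factor:
  assumes fg: "residue_monomial M (f * g) e"
  shows "\<exists>d. residue_monomial M f d"
proof -
  have "\<exists>j. coeff f j \<notin> M" "\<exists>j. coeff g j \<notin> M"
    using fg coeff_mult_mem[of _ f g] coeff_mult_mem[of _ g f]
    unfolding residue_monomial_def by (auto simp: mult.commute)
  then obtain a b a' b' where
      a: "coeff f a \<notin> M" "\<And>j. j < a \<Longrightarrow> coeff f j \<in> M" "\<And>j. a' < j \<Longrightarrow> coeff f j \<in> M"
    and b: "coeff g b \<notin> M" "\<And>j. j < b \<Longrightarrow> coeff g j \<in> M" "\<And>j. b' < j \<Longrightarrow> coeff g j \<in> M"
    and a': "coeff f a' \<notin> M" and b': "coeff g b' \<notin> M"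
    using exists_least_iff[of "\<lambda>j. coeff _ j \<notin> M"] highest_coeff_not_mem by metis
  \<comment> \<open>The lowest and the highest residue terms of \<open>f * g\<close> both sit in degree \<open>e\<close>.\<close>
  have "coeff f i \<in> M \<or> coeff g (a + b - i) \<in> M" if "i \<le> a + b" "i \<noteq> a" for i
    using a(2) b(2) that by (cases "i < a") auto
  then have "coeff (f * g) (a + b) \<notin> M"
    using a(1) b(1) by (intro coeff_mult_not_mem[of a]) auto
  moreover have "coeff f i \<in> M \<or> coeff g (a' + b' - i) \<in> M" if "i \<le> a' + b'" "i \<noteq> a'" for i
    using a(3) b(3) that by (cases "i < a'") auto
  then have "coeff (f * g) (a' + b') \<notin> M"
    using a' b' by (intro coeff_mult_not_mem[of a']) auto
  ultimately have "a + b = a' + b'"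
    using fg unfolding residue_monomial_def by metis
  moreover have "a \<le> a'" "b \<le> b'"
    using a b a' b' not_le by blast+
  ultimately have "a = a'" by simp
  then have "residue_monomial M f a"
    unfolding residue_monomial_def using a by (auto simp: neq_iff)
  then show ?thesis ..
qed

definition residue_degree :: "'a poly \<Rightarrow> nat" where
  "residue_degree f = (LEAST d. coeff f d \<notin> M)"

lemma residue_degree_eq: "residue_monomial M f d \<Longrightarrow> residue_degree f = d"
  unfolding residue_degree_def residue_monomial_def by (rule Least_equality) auto

lemma residue_monomial_prod_list:
  "(\<And>f. f \<in> set fs \<Longrightarrow> residue_monomial M f (h f))
   \<Longrightarrow> residue_monomial M (prod_list fs) (sum_list (map h fs))"
  by (induct fs) (auto simp: residue_monomial_mult residue_monomial_x_power[of 0, simplified])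

lemma residue_monomial_prod_list_factors:
  "residue_monomial M (prod_list fs) e \<Longrightarrow> f \<in> set fs \<Longrightarrow> residue_monomial M f (residue_degree f)"
proof (induct fs arbitrary: e)
  case (Cons g fs)
  then have "residue_monomial M (g * prod_list fs) e" by simp
  then obtain d d' where "residue_monomial M g d" "residue_monomial M (prod_list fs) d'"
    using residue_monomial_factor[of g] residue_monomial_factor[of "prod_list fs" g]
    by (metis mult.commute)
  with Cons show ?case by (auto simp: residue_degree_eq)
qed simp

lemma poly_square_zero: "(\<And>i. coeff m i \<in> M) \<Longrightarrow> m * m = 0"
  by (rule poly_eqI) (auto simp: coeff_mult square_zero intro!: sum.neutral)

lemma residue_monomial_0_unit:
  assumes "residue_monomial M f 0"
  shows "f dvd 1"
proof -
  define u where "u = coeff f 0"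
  obtain v where uv: "u * v = 1"
    using assms unfolding residue_monomial_def u_def by (auto simp: not_mem_iff_unit)
  define m where "m = f - [:u:]"
  have "m * m = 0"
    using assms zero_mem unfolding m_def residue_monomial_def u_def
    by (intro poly_square_zero) (auto simp: coeff_pCons split: nat.splits)
  have f: "f = [:u:] + m"
    by (simp add: m_def)
  \<comment> \<open>\<open>u + m\<close> is inverted by \<open>v - v\<^sup>2 m\<close>, the truncated geometric series.\<close>
  have "f * ([:v:] - smult (v * v) m) = [:u * v:] + smult (v - u * v * v) m - smult (v * v) (m * m)"
    unfolding f by (simp add: algebra_simps smult_add_right smult_diff_right smult_diff_left)
  also have "\<dots> = 1"
    using uv \<open>m * m = 0\<close> by (simp add: mult.assoc one_pCons)
  finally show ?thesis
    by (metis dvdI)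
qed

lemma unit_coeff_0_not_mem:
  assumes "f dvd 1"
  shows "coeff f 0 \<notin> M"
proof -
  obtain g where "1 = f * g"
    using assms by (elim dvdE)
  then have "coeff f 0 * coeff g 0 = 1"
    by (metis coeff_mult_0 one_poly_eq_simps(1) coeff_pCons_0)
  then show ?thesis
    by (auto simp: not_mem_iff_unit intro: dvdI)
qed

lemma irreducible_residue_degree_pos: "irreducible f \<Longrightarrow> residue_monomial M f d \<Longrightarrow> 0 < d"
  using residue_monomial_0_unit by (cases d) (auto simp: irreducible_def)

lemma irreducible_coeff_0_neq_zero:
  assumes "irreducible f" "residue_monomial M f d" "2 \<le> d"
  shows "coeff f 0 \<noteq> 0"
proof
  assume "coeff f 0 = 0"
  moreover obtain a q where "f = pCons a q"
    by (cases f)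
  ultimately have q: "f = [:0, 1:] * q"
    by simp
  \<comment> \<open>Neither factor is a unit: the cofactor has constant term \<open>coeff f 1 \<in> M\<close>.\<close>
  have "coeff f 1 \<in> M"
    using assms(2,3) unfolding residue_monomial_def by auto
  then have "coeff q 0 \<in> M"
    by (simp add: q)
  moreover have "\<not> [:0, 1:] dvd (1 :: 'a poly)"
    using unit_coeff_0_not_mem[of "[:0, 1:]"] zero_mem by auto
  ultimately show False
    using assms(1) q unit_coeff_0_not_mem unfolding irreducible_def by blast
qed

lemma coeff_mult_eq_0_below:
  assumes f: "residue_monomial M f d" and g: "residue_monomial M g e"
    and f0: "\<And>j. j < a \<Longrightarrow> coeff f j = 0" and g0: "\<And>j. j < b \<Longrightarrow> coeff g j = 0"
    and k: "k < a + e" "k < d + b"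
  shows "coeff (f * g) k = 0"
  unfolding coeff_mult
proof (rule sum.neutral, rule ballI)
  fix i assume "i \<in> {..k}"
  show "coeff f i * coeff g (k - i) = 0"
  proof (cases "i < a \<or> k - i < b")
    case True
    then show ?thesis using f0 g0 by auto
  next
    case False
    with \<open>i \<in> {..k}\<close> k have "i \<noteq> d" "k - i \<noteq> e" by auto
    then show ?thesis
      using f g unfolding residue_monomial_def by (simp add: square_zero)
  qed
qed

lemma coeff_mult_neq_zero:
  assumes f: "residue_monomial M f d" and g: "residue_monomial M g e"
    and "coeff f 0 \<noteq> 0" "s < d" and g0: "\<And>j. j < e - s \<Longrightarrow> coeff g j = 0"
  shows "coeff (f * g) e \<noteq> 0"
proof -
  have "coeff f i * coeff g (e - i) = 0" if "i \<in> {..e} - {0}" for i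
  proof (cases "i = d")
    case True
    with that \<open>s < d\<close> show ?thesis using g0 by auto
  next
    case False
    with that have "coeff f i \<in> M" "coeff g (e - i) \<in> M"
      using f g unfolding residue_monomial_def by auto
    then show ?thesis by (rule square_zero)
  qed
  then have "coeff (f * g) e = coeff f 0 * coeff g e"
    unfolding coeff_mult by (simp add: sum.remove[of _ 0] sum.neutral)
  moreover have "coeff g e \<notin> M"
    using g by (simp add: residue_monomial_def)
  ultimately show ?thesis
    using \<open>coeff f 0 \<noteq> 0\<close> by (simp add: mult_not_mem_neq_zero)
qed

lemma prod_list_coeff_eq_0_below:
  "(\<And>f. f \<in> set fs \<Longrightarrow> residue_monomial M f 1) \<Longrightarrow> j < length fs - 1
   \<Longrightarrow> coeff (prod_list fs) j = 0"
proof (induct fs arbitrary: j)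
  case (Cons g fs)
  have "residue_monomial M (prod_list fs) (length fs)"
    using residue_monomial_prod_list[of fs "\<lambda>_. 1"] Cons.prems(1) by (simp add: sum_list_triv)
  with Cons show ?case
    unfolding prod_list.Cons by (intro coeff_mult_eq_0_below[of g 1 _ "length fs" 0 "length fs - 1"]) auto
qed simp

lemma irreducible_mult_neq_x_power:
  assumes "irreducible f" "residue_monomial M f d" "residue_monomial M g e"
    and "s < d" "2 \<le> d" "\<And>j. j < e - s \<Longrightarrow> coeff g j = 0"
  shows "f * g \<noteq> [:0, 1:] ^ (d + e)"
proof
  have "coeff (f * g) e \<noteq> 0"
    using assms irreducible_coeff_0_neq_zero by (intro coeff_mult_neq_zero) auto
  moreover assume "f * g = [:0, 1:] ^ (d + e)"
  ultimately show False
    using \<open>2 \<le> d\<close> by (simp add: coeff_x_power)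
qed

lemma irreducible_factorization_x_power:
  fixes fs :: "'a poly list"
  assumes "prod_list fs = [:0, 1:] ^ n" "\<And>f. f \<in> set fs \<Longrightarrow> irreducible f"
  shows "\<And>f. f \<in> set fs \<Longrightarrow> residue_monomial M f (residue_degree f)"
    and "\<And>f. f \<in> set fs \<Longrightarrow> 0 < residue_degree f"
    and "sum_list (map residue_degree fs) = n"
proof -
  show factors: "residue_monomial M f (residue_degree f)" if "f \<in> set fs" for f
    using residue_monomial_prod_list_factors[OF _ that] assms(1) residue_monomial_x_power by metis
  show "0 < residue_degree f" if "f \<in> set fs" for f
    using irreducible_residue_degree_pos[OF assms(2) factors] that by simp
  show "sum_list (map residue_degree fs) = n"
    using residue_monomial_prod_list[OF factors] assms(1) residue_monomial_x_power
      residue_monomial_unique by metis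
qed

lemma irreducible_factorization_x_power_length_neq_pred:
  fixes fs :: "'a poly list"
  assumes "prod_list fs = [:0, 1:] ^ n" "\<And>f. f \<in> set fs \<Longrightarrow> irreducible f" "0 < n"
  shows "length fs \<noteq> n - 1"
proof
  assume "length fs = n - 1"
  with assms(3) have "sum_list (map residue_degree fs) = Suc (length fs)"
    using irreducible_factorization_x_power(3)[OF assms(1,2)] by simp
  then obtain ys g zs where fs: "fs = ys @ g # zs" and g: "residue_degree g = 2"
    and rest: "\<forall>f\<in>set (ys @ zs). residue_degree f = 1"
    using sum_list_eq_Suc_length_split[of fs residue_degree]
      irreducible_factorization_x_power(2)[OF assms(1,2)] by (auto simp: Suc_le_eq)
  have rest_monomial: "residue_monomial M f 1" if "f \<in> set (ys @ zs)" for f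
    using irreducible_factorization_x_power(1)[OF assms(1,2)] rest that fs by fastforce
  define P where "P = prod_list (ys @ zs)"
  have "residue_monomial M P (length (ys @ zs))"
    using residue_monomial_prod_list[of "ys @ zs" "\<lambda>_. 1"] rest_monomial
    unfolding P_def by (simp add: sum_list_triv)
  moreover have "coeff P j = 0" if "j < length (ys @ zs) - 1" for j
    using prod_list_coeff_eq_0_below[of "ys @ zs"] rest_monomial that unfolding P_def by blast
  moreover have "residue_monomial M g 2"
    using irreducible_factorization_x_power(1)[OF assms(1,2)] g fs by fastforce
  moreover have "irreducible g"
    using assms(2) fs by simp
  ultimately have "g * P \<noteq> [:0, 1:] ^ (2 + length (ys @ zs))"
    by (intro irreducible_mult_neq_x_power[of _ 2 _ _ 1]) auto
  moreover have "g * P = prod_list fs"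
    by (simp add: P_def fs mult_ac)
  moreover have "2 + length (ys @ zs) = n"
    using \<open>length fs = n - 1\<close> \<open>0 < n\<close> fs by simp
  ultimately show False
    using assms(1) by metis
qed

lemma irreducible_factorization_x_power_length_neq_two:
  fixes fs :: "'a poly list"
  assumes "prod_list fs = [:0, 1:] ^ n" "\<And>f. f \<in> set fs \<Longrightarrow> irreducible f" "odd n"
  shows "length fs \<noteq> 2"
proof
  assume "length fs = 2"
  then obtain f g where fs: "fs = [f, g]"
    by (auto simp: numeral_2_eq_2 length_Suc_conv)
  note factors = irreducible_factorization_x_power[OF assms(1,2)]
  have mono: "residue_monomial M f (residue_degree f)" "residue_monomial M g (residue_degree g)"
    and pos: "0 < residue_degree f" "0 < residue_degree g"
    and irr: "irreducible f" "irreducible g"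
    using factors(1,2) assms(2) fs by auto
  have deg: "residue_degree f + residue_degree g = n" and prod: "f * g = [:0, 1:] ^ n"
    using factors(3) assms(1) fs by simp_all
  with \<open>odd n\<close> consider "residue_degree g < residue_degree f" | "residue_degree f < residue_degree g"
    by (metis linorder_neqE_nat odd_add)
  then show False
  proof cases
    case 1
    then show False
      using irreducible_mult_neq_x_power[OF irr(1) mono, of "residue_degree g"] pos prod deg by auto
  next
    case 2
    then show False
      using irreducible_mult_neq_x_power[OF irr(2) mono(2,1), of "residue_degree f"] pos prod deg
      by (auto simp: mult.commute add.commute)
  qed
qed

end

theorem lemma4p4:
  fixes M :: "'a::comm_ring_1 set" and n :: nat
  assumes "artinian_ring TYPE('a)"
    and "local_ring_with_max M"
    and "M \<noteq> {0}"
    and "\<forall>a\<in>M. \<forall>b\<in>M. a * b = 0"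
    and "n > 0"
  shows "n - 1 \<notin> lengths ([:0, 1:] ^ n :: 'a poly)
     \<and> (odd n \<longrightarrow> 2 \<notin> lengths ([:0, 1:] ^ n :: 'a poly))"
proof -
  interpret maximal_square_zero M
    using assms(2,4) by unfold_locales (auto simp: local_ring_with_max_def)
  show ?thesis
    using irreducible_factorization_x_power_length_neq_pred[OF _ _ \<open>n > 0\<close>]
      irreducible_factorization_x_power_length_neq_two
    unfolding lengths_def by blast
qed

end
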